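(* Let $n\ge 3$. Each of the following representations $\zeta'_i:\mathrm{TVB}_n\to\mathrm{GL}_{n+1}(\mathbb{C})$, $1\le i\le 7$, given by $\zeta'_i(\sigma_k)=L_k(S)$, $\zeta'_i(\rho_k)=L_k(R)$ ($1\le k\le n-1$), $\zeta'_i(\gamma_j)=L_j(G)$ ($1\le j\le n$), is unfaithful (not injective): \begin{itemize} \item[(1)] $\zeta'_1$: $S=\begin{pmatrix}0&b\\ c&0\end{pmatrix}$, $R=\begin{pmatrix}0&-\frac{\sqrt b}{\sqrt c}\\ -\frac{\sqrt c}{\sqrt b}&0\end{pmatrix}$, $G=\mathrm{diag}(-1,1)$, $b,c\in\mathbb{C}^*$. \item[(2)] $\zeta'_2$: $S=\begin{pmatrix}0&b\\ c&0\end{pmatrix}$, $R=\begin{pmatrix}0&\frac{\sqrt b}{\sqrt c}\\ \frac{\sqrt c}{\sqrt b}&0\end{pmatrix}$, $G=\mathrm{diag}(-1,1)$, $b,c\in\mathbb{C}^*$. \item[(3)] $\zeta'_3$: $S$ and $R$ as in (1), $G=I_2$. \item[(4)] $\zeta'_4$: $S$ and $R$ as in (2), $G=I_2$. \item[(5)] $\zeta'_5$: $S=I_2$, $R=\begin{pmatrix}0&x\\ \frac1x&0\end{pmatrix}$, $G=\mathrm{diag}(-1,1)$, $x\in\mathbb{C}^*$. \item[(6)] $\zeta'_6$: $S=I_2$, $R=\begin{pmatrix}0&x\\ \frac1x&0\end{pmatrix}$, $G=I_2$, $x\in\mathbb{C}^*$. \item[(7)] $\zeta'_7$: $S=R=G=I_2$.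 \end{itemize} Here $\mathbb{C}^*=\mathbb{C}\setminus\{0\}$ and $\sqrt b,\sqrt c$ denote square roots of $b,c$.
   Context: For $n\ge 2$, the twisted virtual braid group $\mathrm{TVB}_n$ is the group with generators $\sigma_1,\dots,\sigma_{n-1}$, $\rho_1,\dots,\rho_{n-1}$, $\gamma_1,\dots,\gamma_n$ and defining relations: $\sigma_i\sigma_{i+1}\sigma_i=\sigma_{i+1}\sigma_i\sigma_{i+1}$ ($1\le i\le n-2$); $\sigma_i\sigma_j=\sigma_j\sigma_i$ ($|i-j|\ge2$); $\rho_i^2=1$; $\rho_i\rho_j=\rho_j\rho_i$ ($|i-j|\ge 2$); $\rho_i\rho_{i+1}\rho_i=\rho_{i+1}\rho_i\rho_{i+1}$; $\sigma_i\rho_j=\rho_j\sigma_i$ ($|i-j|\ge 2$); $\rho_i\rho_{i+1}\sigma_i=\sigma_{i+1}\rho_i\rho_{i+1}$; $\gamma_i^2=1$; $\gamma_i\gamma_j=\gamma_j\gamma_i$ (all $i,j$); $\gamma_j\rho_i=\rho_i\gamma_j$ and $\gamma_j\sigma_i=\sigma_i\gamma_j$ ($|i-j|\ge 2$); $\rho_i\gamma_i=\gamma_{i+1}\rho_i$; $\rho_i\sigma_i\rho_i=\gamma_{i+1}\gamma_i\sigma_i\gamma_i\gamma_{i+1}$ ($1\le i\le n-1$). For a $2\times2$ matrix $M$ and $1\le i\le n$, $L_i(M)$ denotes the $(n+1)\times(n+1)$ block-diagonal matrix $\mathrm{diag}(I_{i-1},M,I_{n-i})$. A representation is faithful if it is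 injective. *)

theory Defs
  imports Complex_Main "Jordan_Normal_Form.Matrix" "Jordan_Normal_Form.Gauss_Jordan_Elimination"
begin

datatype tgen = Sg nat | Rh nat | Gm nat

fun valid_gen :: "nat \<Rightarrow> tgen \<Rightarrow> bool" where
  "valid_gen n (Sg k) = (1 \<le> k \<and> k \<le> n - 1)"
| "valid_gen n (Rh k) = (1 \<le> k \<and> k \<le> n - 1)"
| "valid_gen n (Gm j) = (1 \<le> j \<and> j \<le> n)"

text \<open>Words in the free group: letters (g, True) = g, (g, False) = g^{-1}.\<close>
type_synonym tword = "(tgen \<times> bool) list"

definition valid_word :: "nat \<Rightarrow> tword \<Rightarrow> bool" where
  "valid_word n w = (\<forall>l \<in> set w. valid_gen n (fst l))"

definition pos :: "tgen list \<Rightarrow> tword" where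
  "pos u = map (\<lambda>g. (g, True)) u"

inductive tvb_relator :: "nat \<Rightarrow> tgen list \<Rightarrow> tgen list \<Rightarrow> bool" for n where
  r1: "1 \<le> i \<Longrightarrow> i \<le> n - 2 \<Longrightarrow> tvb_relator n [Sg i, Sg (i+1), Sg i] [Sg (i+1), Sg i, Sg (i+1)]"
| r2: "1 \<le> i \<Longrightarrow> i \<le> n - 1 \<Longrightarrow> 1 \<le> j \<Longrightarrow> j \<le> n - 1 \<Longrightarrow> i + 2 \<le> j \<or> j + 2 \<le> i
       \<Longrightarrow> tvb_relator n [Sg i, Sg j] [Sg j, Sg i]"
| r3: "1 \<le> i \<Longrightarrow> i \<le> n - 1 \<Longrightarrow> tvb_relator n [Rh i, Rh i] []"
| r4: "1 \<le> i \<Longrightarrow> i \<le> n - 1 \<Longrightarrow> 1 \<le> j \<Longrightarrow> j \<le> n - 1 \<Longrightarrow> i + 2 \<le> j \<or> j + 2 \<le> i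
       \<Longrightarrow> tvb_relator n [Rh i, Rh j] [Rh j, Rh i]"
| r5: "1 \<le> i \<Longrightarrow> i \<le> n - 2 \<Longrightarrow> tvb_relator n [Rh i, Rh (i+1), Rh i] [Rh (i+1), Rh i, Rh (i+1)]"
| r6: "1 \<le> i \<Longrightarrow> i \<le> n - 1 \<Longrightarrow> 1 \<le> j \<Longrightarrow> j \<le> n - 1 \<Longrightarrow> i + 2 \<le> j \<or> j + 2 \<le> i
       \<Longrightarrow> tvb_relator n [Sg i, Rh j] [Rh j, Sg i]"
| r7: "1 \<le> i \<Longrightarrow> i \<le> n - 2 \<Longrightarrow> tvb_relator n [Rh i, Rh (i+1), Sg i] [Sg (i+1), Rh i, Rh (i+1)]"
| r8: "1 \<le> i \<Longrightarrow> i \<le> n \<Longrightarrow> tvb_relator n [Gm i, Gm i] []"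
| r9: "1 \<le> i \<Longrightarrow> i \<le> n \<Longrightarrow> 1 \<le> j \<Longrightarrow> j \<le> n \<Longrightarrow> tvb_relator n [Gm i, Gm j] [Gm j, Gm i]"
| r10: "1 \<le> i \<Longrightarrow> i \<le> n - 1 \<Longrightarrow> 1 \<le> j \<Longrightarrow> j \<le> n \<Longrightarrow> i + 2 \<le> j \<or> j + 2 \<le> i
       \<Longrightarrow> tvb_relator n [Gm j, Rh i] [Rh i, Gm j]"
| r11: "1 \<le> i \<Longrightarrow> i \<le> n - 1 \<Longrightarrow> 1 \<le> j \<Longrightarrow> j \<le> n \<Longrightarrow> i + 2 \<le> j \<or> j + 2 \<le> i
       \<Longrightarrow> tvb_relator n [Gm j, Sg i] [Sg i, Gm j]"
| r12: "1 \<le> i \<Longrightarrow> i \<le> n - 1 \<Longrightarrow> tvb_relator n [Rh i, Gm i] [Gm (i+1), Rh i]"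
| r13: "1 \<le> i \<Longrightarrow> i \<le> n - 1 \<Longrightarrow>
       tvb_relator n [Rh i, Sg i, Rh i] [Gm (i+1), Gm i, Sg i, Gm i, Gm (i+1)]"

inductive tvb_eq :: "nat \<Rightarrow> tword \<Rightarrow> tword \<Rightarrow> bool" for n where
  refl: "tvb_eq n w w"
| sym: "tvb_eq n u v \<Longrightarrow> tvb_eq n v u"
| trans: "tvb_eq n u v \<Longrightarrow> tvb_eq n v w \<Longrightarrow> tvb_eq n u w"
| cong: "tvb_eq n u v \<Longrightarrow> tvb_eq n (x @ u @ y) (x @ v @ y)"
| cancel: "tvb_eq n [(g, b), (g, \<not> b)] []"
| rel: "tvb_relator n u v \<Longrightarrow> tvb_eq n (pos u) (pos v)"

text \<open>L_i(M) = diag(I_{i-1}, M, I_{n-i}) of size (n+1) x (n+1); M occupies rows/columns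
  i, i+1 (1-based), i.e. i-1, i (0-based).\<close>
definition Lmat :: "nat \<Rightarrow> nat \<Rightarrow> complex mat \<Rightarrow> complex mat" where
  "Lmat n i M = mat (n+1) (n+1) (\<lambda>(r, c).
     if i - 1 \<le> r \<and> r \<le> i \<and> i - 1 \<le> c \<and> c \<le> i then M $$ (r - (i - 1), c - (i - 1))
     else if r = c then 1 else 0)"

definition mat2 :: "complex \<Rightarrow> complex \<Rightarrow> complex \<Rightarrow> complex \<Rightarrow> complex mat" where
  "mat2 a b c d = mat_of_rows_list 2 [[a, b], [c, d]]"

fun gen_img :: "nat \<Rightarrow> complex mat \<Rightarrow> complex mat \<Rightarrow> complex mat \<Rightarrow> tgen \<Rightarrow> complex mat" where
  "gen_img n S R G (Sg k) = Lmat n k S"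
| "gen_img n S R G (Rh k) = Lmat n k R"
| "gen_img n S R G (Gm j) = Lmat n j G"

fun letter_img :: "nat \<Rightarrow> complex mat \<Rightarrow> complex mat \<Rightarrow> complex mat \<Rightarrow> tgen \<times> bool \<Rightarrow> complex mat" where
  "letter_img n S R G (g, True) = gen_img n S R G g"
| "letter_img n S R G (g, False) = the (mat_inverse (gen_img n S R G g))"

definition word_img :: "nat \<Rightarrow> complex mat \<Rightarrow> complex mat \<Rightarrow> complex mat \<Rightarrow> tword \<Rightarrow> complex mat" where
  "word_img n S R G w = foldr (\<lambda>l A. letter_img n S R G l * A) w (1\<^sub>m (n+1))"

definition unfaithful :: "nat \<Rightarrow> complex mat \<Rightarrow> complex mat \<Rightarrow> complex mat \<Rightarrow> bool" where
  "unfaithful n S R G = (\<exists>w1 w2. valid_word n w1 \<and> valid_word n w2 \<and> \<not> tvb_eq n w1 w2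
     \<and> word_img n S R G w1 = word_img n S R G w2)"

end

theory Submission
  imports Defs "HOL-Combinatorics.Transposition"
begin

text \<open>
  Each representation kills an element that survives in \<open>TVB\<^sub>n\<close>. If \<open>S = I\<close>,
  this is \<open>\<sigma>\<^sub>1\<close>, which the exponent sum in the \<open>\<sigma>\<close>'s, a homomorphism
  \<open>TVB\<^sub>n \<rightarrow> \<int>\<close>, sends to 1. If \<open>S\<close> and \<open>R\<close> are anti-diagonal with \<open>R\<^sup>2 = I\<close>,
  then \<open>w = (\<sigma>\<^sub>1\<rho>\<^sub>1\<rho>\<^sub>2)\<^sup>2\<close> maps to a diagonal matrix that is scalar on the
  block of \<open>\<rho>\<^sub>2\<close>, so \<open>w\<close> and \<open>\<rho>\<^sub>2 w \<rho>\<^sub>2\<close> have the same image, i.e. the commutator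
  of \<open>w\<close> and \<open>\<rho>\<^sub>2\<close> is in the kernel. It is nontrivial: under the homomorphism
  \<open>TVB\<^sub>n \<rightarrow> Sym(\<nat>)\<close> with \<open>\<rho>\<^sub>k \<mapsto> (k k+1)\<close> and \<open>\<sigma>\<^sub>k, \<gamma>\<^sub>j \<mapsto> id\<close>,
  \<open>w\<close> maps to the 3-cycle \<open>(s\<^sub>1s\<^sub>2)\<^sup>2\<close>, which does not commute with \<open>s\<^sub>2\<close>.
\<close>

definition block_embed :: "nat \<Rightarrow> 'a::semiring_1 mat \<Rightarrow> 'a mat" where
  "block_embed m A = (let k = dim_row A in
     four_block_mat A (0\<^sub>m k (m - k)) (0\<^sub>m (m - k) k) (1\<^sub>m (m - k)))"

lemma dim_block_embed [simp]:
  "dim_row (block_embed m A) = max (dim_row A) m"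
  "dim_col (block_embed m A) = dim_col A + (m - dim_row A)"
  by (auto simp: block_embed_def Let_def)

lemma index_block_embed:
  assumes "A \<in> carrier_mat k k" "k \<le> m" "i < m" "j < m"
  shows "block_embed m A $$ (i, j) = (if i < k \<and> j < k then A $$ (i, j) else of_bool (i = j))"
  using assms by (auto simp: block_embed_def Let_def)

lemma block_embed_mult:
  assumes "A \<in> carrier_mat k k" "B \<in> carrier_mat k k"
  shows "block_embed m A * block_embed m B = block_embed m (A * B)"
proof -
  have "dim_row (A * B) = k" using assms by simp
  then show ?thesis
    using assms unfolding block_embed_def Let_def
    by (subst mult_four_block_mat[of _ k k _ "m - k" _ "m - k"]) auto
qed

definition mat3 :: "'a \<Rightarrow> 'a \<Rightarrow> 'a \<Rightarrow> 'a \<Rightarrow> 'a \<Rightarrow> 'a \<Rightarrow> 'a \<Rightarrow> 'a \<Rightarrow> 'a \<Rightarrow> 'a mat" where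
  "mat3 a00 a01 a02 a10 a11 a12 a20 a21 a22 =
     mat_of_rows_list 3 [[a00, a01, a02], [a10, a11, a12], [a20, a21, a22]]"

lemma dim_mat3 [simp]:
  "dim_row (mat3 a00 a01 a02 a10 a11 a12 a20 a21 a22) = 3"
  "dim_col (mat3 a00 a01 a02 a10 a11 a12 a20 a21 a22) = 3"
  by (simp_all add: mat3_def mat_of_rows_list_def)

lemma mat3_carrier [simp]: "mat3 a00 a01 a02 a10 a11 a12 a20 a21 a22 \<in> carrier_mat 3 3"
  by (rule carrier_matI) simp_all

lemma less_3_iff: "i < 3 \<longleftrightarrow> i = 0 \<or> i = 1 \<or> i = (2::nat)"
  by auto

lemma index_mat3:
  "i < 3 \<Longrightarrow> j < 3 \<Longrightarrow> mat3 a00 a01 a02 a10 a11 a12 a20 a21 a22 $$ (i, j) =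
     [[a00, a01, a02], [a10, a11, a12], [a20, a21, a22]] ! i ! j"
  by (simp add: mat3_def mat_of_rows_list_def)

lemma index_mult_mat_3:
  assumes "A \<in> carrier_mat 3 3" "B \<in> carrier_mat 3 3" "i < 3" "j < 3"
  shows "(A * B) $$ (i, j) =
    A $$ (i, 0) * B $$ (0, j) + A $$ (i, 1) * B $$ (1, j) + A $$ (i, 2) * B $$ (2, j)"
  using assms by (simp add: scalar_prod_def numeral_3_eq_3 numeral_2_eq_2 add.assoc)

lemma mat3_mult:
  "(mat3 a00 a01 a02 a10 a11 a12 a20 a21 a22 :: 'a::comm_semiring_1 mat) *
     mat3 b00 b01 b02 b10 b11 b12 b20 b21 b22 =
   mat3 (a00*b00 + a01*b10 + a02*b20) (a00*b01 + a01*b11 + a02*b21) (a00*b02 + a01*b12 + a02*b22)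
        (a10*b00 + a11*b10 + a12*b20) (a10*b01 + a11*b11 + a12*b21) (a10*b02 + a11*b12 + a12*b22)
        (a20*b00 + a21*b10 + a22*b20) (a20*b01 + a21*b11 + a22*b21) (a20*b02 + a21*b12 + a22*b22)"
  (is "?A * ?B = ?C")
proof (rule eq_matI)
  fix i j assume "i < dim_row ?C" "j < dim_col ?C"
  then have "i \<in> {0, 1, 2}" "j \<in> {0, 1, 2}" by auto
  then show "(?A * ?B) $$ (i, j) = ?C $$ (i, j)"
    by (auto simp: index_mult_mat_3 index_mat3 simp del: index_mult_mat)
qed simp_all

lemma one_mat_block_embed:
  assumes "3 \<le> m"
  shows "1\<^sub>m m = block_embed m (mat3 1 0 0 0 1 0 0 0 (1::'a::semiring_1))"
proof (rule eq_matI)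
  fix i j assume "i < dim_row (block_embed m (mat3 1 0 0 0 1 0 0 0 (1::'a)))"
    "j < dim_col (block_embed m (mat3 1 0 0 0 1 0 0 0 (1::'a)))"
  with assms have "i < m" "j < m" by auto
  with assms show "1\<^sub>m m $$ (i, j) = block_embed m (mat3 1 0 0 0 1 0 0 0 (1::'a)) $$ (i, j)"
    by (auto simp: index_block_embed[OF mat3_carrier] index_mat3 less_3_iff)
qed (use assms in auto)

lemma index_Lmat:
  assumes "i < n + 1" "j < n + 1"
  shows "Lmat n k M $$ (i, j) =
    (if k - 1 \<le> i \<and> i \<le> k \<and> k - 1 \<le> j \<and> j \<le> k then M $$ (i - (k - 1), j - (k - 1))
     else of_bool (i = j))"
  using assms by (simp add: Lmat_def)

lemma index_mat2:
  "i < 2 \<Longrightarrow> j < 2 \<Longrightarrow> mat2 a b c d $$ (i, j) = [[a, b], [c, d]] ! i ! j"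
  by (simp add: mat2_def mat_of_rows_list_def)

lemma Lmat_carrier: "Lmat n k M \<in> carrier_mat (n + 1) (n + 1)"
  by (simp add: Lmat_def)

lemma Lmat_block_embed:
  assumes "1 \<le> k" "k \<le> m" "m \<le> n"
  shows "Lmat n k M = block_embed (n + 1) (Lmat m k M)"
proof (rule eq_matI)
  fix i j assume "i < dim_row (block_embed (n + 1) (Lmat m k M))"
    "j < dim_col (block_embed (n + 1) (Lmat m k M))"
  with assms have "i < n + 1" "j < n + 1" by (simp_all add: Lmat_def)
  with assms show "Lmat n k M $$ (i, j) = block_embed (n + 1) (Lmat m k M) $$ (i, j)"
    by (auto simp: index_block_embed[OF Lmat_carrier] index_Lmat)
qed (use assms in \<open>simp_all add: Lmat_def\<close>)

lemma Lmat_2_mat2: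
  "Lmat 2 1 (mat2 a b c d) = mat3 a b 0 c d 0 0 0 1"
  "Lmat 2 2 (mat2 a b c d) = mat3 1 0 0 0 a b 0 c d"
  by (rule eq_matI; auto simp: index_Lmat index_mat3 index_mat2 less_3_iff Lmat_def)+

lemma Lmat_mat2_block_embed:
  assumes "2 \<le> n"
  shows "Lmat n 1 (mat2 a b c d) = block_embed (n + 1) (mat3 a b 0 c d 0 0 0 1)"
    "Lmat n 2 (mat2 a b c d) = block_embed (n + 1) (mat3 1 0 0 0 a b 0 c d)"
  using assms Lmat_block_embed[of 1 2 n] Lmat_block_embed[of 2 2 n]
  by (simp_all add: Lmat_2_mat2 del: One_nat_def)

text \<open>Used with \<open>One_nat_def\<close> removed from the simpset, which would turn \<open>n + 1\<close>
  into \<open>Suc n\<close> and so prevent these equations from matching.\<close>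
lemmas block_embed_mat3_simps =
  Lmat_mat2_block_embed one_mat_block_embed block_embed_mult[OF mat3_carrier mat3_carrier] mat3_mult

definition sigma_rho_square :: tword where
  "sigma_rho_square = pos [Sg 1, Rh 1, Rh 2, Sg 1, Rh 1, Rh 2]"

definition rho2_conj :: "tword \<Rightarrow> tword" where
  "rho2_conj w = (Rh 2, True) # w @ [(Rh 2, True)]"

lemma word_img_sigma_rho_square:
  assumes "2 \<le> n" "r * r' = 1"
  shows "word_img n (mat2 0 b c 0) (mat2 0 r r' 0) G sigma_rho_square =
    block_embed (n + 1) (mat3 ((b * r')\<^sup>2) 0 0 0 (c * r) 0 0 0 (c * r))"
  using assms
  by (simp add: sigma_rho_square_def pos_def word_img_def block_embed_mat3_simps
      power2_eq_square algebra_simps del: One_nat_def)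

lemma word_img_rho2_conj_sigma_rho_square:
  assumes "2 \<le> n" "r * r' = 1"
  shows "word_img n (mat2 0 b c 0) (mat2 0 r r' 0) G (rho2_conj sigma_rho_square) =
    block_embed (n + 1) (mat3 ((b * r')\<^sup>2) 0 0 0 (c * r) 0 0 0 (c * r))"
  using assms
  by (simp add: rho2_conj_def sigma_rho_square_def pos_def word_img_def block_embed_mat3_simps
      power2_eq_square algebra_simps del: One_nat_def)

fun rho_perm :: "tword \<Rightarrow> nat \<Rightarrow> nat" where
  "rho_perm [] = id"
| "rho_perm ((Rh k, _) # w) = Transposition.transpose k (k + 1) \<circ> rho_perm w"
| "rho_perm ((Sg _, _) # w) = rho_perm w"
| "rho_perm ((Gm _, _) # w) = rho_perm w"

fun sigma_exponent :: "tword \<Rightarrow> int" where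
  "sigma_exponent [] = 0"
| "sigma_exponent ((Sg _, b) # w) = (if b then 1 else -1) + sigma_exponent w"
| "sigma_exponent ((Rh _, _) # w) = sigma_exponent w"
| "sigma_exponent ((Gm _, _) # w) = sigma_exponent w"

lemma rho_perm_append: "rho_perm (u @ v) = rho_perm u \<circ> rho_perm v"
  by (induction u rule: rho_perm.induct) (simp_all add: comp_assoc)

lemma sigma_exponent_append: "sigma_exponent (u @ v) = sigma_exponent u + sigma_exponent v"
  by (induction u rule: sigma_exponent.induct) simp_all

lemma tvb_eq_rho_perm: "tvb_eq n u v \<Longrightarrow> rho_perm u = rho_perm v"
proof (induction rule: tvb_eq.induct)
  case (cancel g b)
  then show ?case by (cases g) (simp_all add: fun_eq_iff)
next
  case (rel u v)
  then show ?case
    by (induction rule: tvb_relator.induct) (auto simp: pos_def fun_eq_iff transpose_def)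
qed (simp_all add: rho_perm_append)

lemma tvb_eq_sigma_exponent: "tvb_eq n u v \<Longrightarrow> sigma_exponent u = sigma_exponent v"
proof (induction rule: tvb_eq.induct)
  case (cancel g b)
  then show ?case by (cases g) simp_all
next
  case (rel u v)
  then show ?case by (induction rule: tvb_relator.induct) (simp_all add: pos_def)
qed (simp_all add: sigma_exponent_append)

lemma not_tvb_eq_rho2_conj_sigma_rho_square: "\<not> tvb_eq n sigma_rho_square (rho2_conj sigma_rho_square)"
proof
  assume "tvb_eq n sigma_rho_square (rho2_conj sigma_rho_square)"
  then have "rho_perm sigma_rho_square 1 = rho_perm (rho2_conj sigma_rho_square) 1"
    by (simp add: tvb_eq_rho_perm)
  then show False
    by (simp add: sigma_rho_square_def rho2_conj_def pos_def transpose_def)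
qed

lemma unfaithful_antidiagonal:
  assumes "3 \<le> n" "r * r' = 1"
  shows "unfaithful n (mat2 0 b c 0) (mat2 0 r r' 0) G"
  unfolding unfaithful_def
proof (intro exI conjI)
  show "valid_word n sigma_rho_square" "valid_word n (rho2_conj sigma_rho_square)"
    using assms by (auto simp: valid_word_def sigma_rho_square_def rho2_conj_def pos_def)
  show "\<not> tvb_eq n sigma_rho_square (rho2_conj sigma_rho_square)"
    by (rule not_tvb_eq_rho2_conj_sigma_rho_square)
  show "word_img n (mat2 0 b c 0) (mat2 0 r r' 0) G sigma_rho_square =
      word_img n (mat2 0 b c 0) (mat2 0 r r' 0) G (rho2_conj sigma_rho_square)"
    using assms by (simp add: word_img_sigma_rho_square word_img_rho2_conj_sigma_rho_square)
qed

lemma unfaithful_identity_sigma: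
  assumes "2 \<le> n"
  shows "unfaithful n (mat2 1 0 0 1) R G"
  unfolding unfaithful_def
proof (intro exI conjI)
  show "valid_word n [(Sg 1, True)]" "valid_word n []"
    using assms by (simp_all add: valid_word_def)
  show "\<not> tvb_eq n [(Sg 1, True)] []"
    using tvb_eq_sigma_exponent by fastforce
  show "word_img n (mat2 1 0 0 1) R G [(Sg 1, True)] = word_img n (mat2 1 0 0 1) R G []"
    using assms
    by (simp add: word_img_def block_embed_mat3_simps del: One_nat_def)
qed

theorem theorem3p5:
  fixes n :: nat
  assumes "n \<ge> 3"
  shows
    "(\<forall>b c sb sc :: complex. b \<noteq> 0 \<longrightarrow> c \<noteq> 0 \<longrightarrow> sb\<^sup>2 = b \<longrightarrow> sc\<^sup>2 = c \<longrightarrow>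
        unfaithful n (mat2 0 b c 0) (mat2 0 (- sb / sc) (- sc / sb) 0) (mat2 (-1) 0 0 1))
   \<and> (\<forall>b c sb sc :: complex. b \<noteq> 0 \<longrightarrow> c \<noteq> 0 \<longrightarrow> sb\<^sup>2 = b \<longrightarrow> sc\<^sup>2 = c \<longrightarrow>
        unfaithful n (mat2 0 b c 0) (mat2 0 (sb / sc) (sc / sb) 0) (mat2 (-1) 0 0 1))
   \<and> (\<forall>b c sb sc :: complex. b \<noteq> 0 \<longrightarrow> c \<noteq> 0 \<longrightarrow> sb\<^sup>2 = b \<longrightarrow> sc\<^sup>2 = c \<longrightarrow>
        unfaithful n (mat2 0 b c 0) (mat2 0 (- sb / sc) (- sc / sb) 0) (mat2 1 0 0 1))
   \<and> (\<forall>b c sb sc :: complex. b \<noteq> 0 \<longrightarrow> c \<noteq> 0 \<longrightarrow> sb\<^sup>2 = b \<longrightarrow> sc\<^sup>2 = c \<longrightarrow>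
        unfaithful n (mat2 0 b c 0) (mat2 0 (sb / sc) (sc / sb) 0) (mat2 1 0 0 1))
   \<and> (\<forall>x :: complex. x \<noteq> 0 \<longrightarrow>
        unfaithful n (mat2 1 0 0 1) (mat2 0 x (1 / x) 0) (mat2 (-1) 0 0 1))
   \<and> (\<forall>x :: complex. x \<noteq> 0 \<longrightarrow>
        unfaithful n (mat2 1 0 0 1) (mat2 0 x (1 / x) 0) (mat2 1 0 0 1))
   \<and> unfaithful n (mat2 1 0 0 1) (mat2 1 0 0 1) (mat2 1 0 0 1)"
proof -
  have "unfaithful n (mat2 0 b c 0) (mat2 0 (- sb / sc) (- sc / sb) 0) G"
    and "unfaithful n (mat2 0 b c 0) (mat2 0 (sb / sc) (sc / sb) 0) G"
    if "b \<noteq> 0" "c \<noteq> 0" "sb\<^sup>2 = b" "sc\<^sup>2 = c" for b c sb sc :: complex and G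
  proof -
    from that have "sb \<noteq> 0" "sc \<noteq> 0" by auto
    with assms show "unfaithful n (mat2 0 b c 0) (mat2 0 (- sb / sc) (- sc / sb) 0) G"
      and "unfaithful n (mat2 0 b c 0) (mat2 0 (sb / sc) (sc / sb) 0) G"
      by (simp_all add: unfaithful_antidiagonal)
  qed
  moreover have "unfaithful n (mat2 1 0 0 1) R G" for R G
    using assms by (simp add: unfaithful_identity_sigma)
  ultimately show ?thesis by simp
qed

end
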